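(* The VCCR $isc$ does not refine Split Cycle (there is a linear profile $\mathbf P$ with $sc(\mathbf P)\not\subseteq isc(\mathbf P)$), and $isc$ fails Positive Involvement in Defeat. Moreover, the VSCC $ISC=\overline{isc}$ fails Tolerant Positive Involvement.
   Context: Profiles: $\mathbf P:V\to\mathcal L(X)$, $V$ nonempty finite set of voters, $X=X(\mathbf P)$ nonempty finite set of candidates, $\mathcal L(X)$ strict linear orders. $\mathrm{Margin}_{\mathbf P}(x,y)$ = #voters ranking $x$ above $y$ minus #ranking $y$ above $x$; $x$ majority preferred to $y$ if $>0$. $\mathcal M(\mathbf P)$: directed graph on $X(\mathbf P)$ with edge $x\to y$ of weight $\mathrm{Margin}_{\mathbf P}(x,y)$ when positive; majority paths are paths in it, the strength of a path being its minimum edge weight. $(x,y)\in sc(\mathbf P)$ iff $\mathrm{Margin}_{\mathbf P}(x,y)>0$ exceeds the strength of every majority path from $y$ to $x$. Ignore-source strength: for a simple path $\rho$ from $a$ to $b$, $\mathrm{Strength}^{is}(\rho)$ is the minimum weight of edges of $\rho$ not starting at $a$ (minimum of the empty set is $\infty$); $\mathrm{Strength}^{is}(a,b)$ is the maximum over majority paths $\rho$ from $a$ to $b$ (maximum of the empty set is $0$). $(x,y)\in isc(\mathbf P)$ iff $\mathrm{Margin}_{\mathbf P}(x,y)>\mathrm{Strength}^{is}(y,x)$; $ISC(\mathbf P)$ = set of candidates not defeated in $isc(\mathbf P)$. Positive Involvement in Defeat (VCCR $f$): if $(x,y)\notin f(\mathbf P)$ and $\mathbf P'$ adds one new voter ranking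 $y$ above $x$, then $(x,y)\notin f(\mathbf P')$. Tolerant Positive Involvement (VSCC $F$): if $x\in F(\mathbf P)$ and $\mathbf P'$ adds one new voter ranking $x$ above every other candidate $y$ to which $x$ is not majority preferred in $\mathbf P$, then $x\in F(\mathbf P')$. *)

theory Defs
  imports "HOL-Library.Extended_Real"
begin

text \<open>Profiles with voters and candidates drawn from nat. A ballot is a strict
linear order on the candidates; (x, y) in the ballot means the voter ranks x above y.\<close>

record prof =
  voters :: "nat set"
  cands  :: "nat set"
  ballot :: "nat \<Rightarrow> (nat \<times> nat) set"

definition profile :: "prof \<Rightarrow> bool" where
  "profile P \<longleftrightarrow> finite (voters P) \<and> voters P \<noteq> {} \<and> finite (cands P) \<and> cands P \<noteq> {} \<and>
     (\<forall>i\<in>voters P. ballot P i \<subseteq> cands P \<times> cands P \<and>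
                    strict_linear_order_on (cands P) (ballot P i))"

definition margin :: "prof \<Rightarrow> nat \<Rightarrow> nat \<Rightarrow> int" where
  "margin P x y = int (card {i\<in>voters P. (x, y) \<in> ballot P i})
                - int (card {i\<in>voters P. (y, x) \<in> ballot P i})"

definition path_edges :: "nat list \<Rightarrow> (nat \<times> nat) list" where
  "path_edges \<rho> = zip \<rho> (tl \<rho>)"

definition mpath :: "prof \<Rightarrow> nat list \<Rightarrow> nat \<Rightarrow> nat \<Rightarrow> bool" where
  "mpath P \<rho> a b \<longleftrightarrow> length \<rho> \<ge> 2 \<and> hd \<rho> = a \<and> last \<rho> = b \<and> distinct \<rho> \<and>
     set \<rho> \<subseteq> cands P \<and> (\<forall>(u, v)\<in>set (path_edges \<rho>). margin P u v > 0)"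

definition strength :: "prof \<Rightarrow> nat list \<Rightarrow> int" where
  "strength P \<rho> = Min {margin P u v | u v. (u, v) \<in> set (path_edges \<rho>)}"

definition sc :: "prof \<Rightarrow> (nat \<times> nat) set" where
  "sc P = {(x, y). x \<in> cands P \<and> y \<in> cands P \<and> margin P x y > 0 \<and>
              (\<forall>\<rho>. mpath P \<rho> y x \<longrightarrow> margin P x y > strength P \<rho>)}"

definition strength_is_path :: "prof \<Rightarrow> nat list \<Rightarrow> nat \<Rightarrow> ereal" where
  "strength_is_path P \<rho> a =
     (let S = {margin P u v | u v. (u, v) \<in> set (path_edges \<rho>) \<and> u \<noteq> a}
      in if S = {} then \<infinity> else ereal (Min S))"

definition strength_is :: "prof \<Rightarrow> nat \<Rightarrow> nat \<Rightarrow> ereal" where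
  "strength_is P a b =
     (if \<exists>\<rho>. mpath P \<rho> a b then Max {strength_is_path P \<rho> a | \<rho>. mpath P \<rho> a b} else 0)"

definition isc :: "prof \<Rightarrow> (nat \<times> nat) set" where
  "isc P = {(x, y). x \<in> cands P \<and> y \<in> cands P \<and>
              ereal (of_int (margin P x y)) > strength_is P y x}"

definition ISC :: "prof \<Rightarrow> nat set" where
  "ISC P = {x \<in> cands P. \<not> (\<exists>y. (y, x) \<in> isc P)}"

definition adds_voter :: "prof \<Rightarrow> prof \<Rightarrow> nat \<Rightarrow> bool" where
  "adds_voter P P' i \<longleftrightarrow> profile P \<and> profile P' \<and> i \<notin> voters P \<and>
     voters P' = insert i (voters P) \<and> cands P' = cands P \<and>
     (\<forall>j\<in>voters P. ballot P' j = ballot P j)"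

definition positive_involvement_in_defeat :: "(prof \<Rightarrow> (nat \<times> nat) set) \<Rightarrow> bool" where
  "positive_involvement_in_defeat f \<longleftrightarrow>
     (\<forall>P P' i x y. adds_voter P P' i \<and> (x, y) \<notin> f P \<and> (y, x) \<in> ballot P' i
        \<longrightarrow> (x, y) \<notin> f P')"

definition tolerant_positive_involvement :: "(prof \<Rightarrow> nat set) \<Rightarrow> bool" where
  "tolerant_positive_involvement F \<longleftrightarrow>
     (\<forall>P P' i x. adds_voter P P' i \<and> x \<in> F P \<and>
        (\<forall>y\<in>cands P. y \<noteq> x \<and> \<not> margin P x y > 0 \<longrightarrow> (x, y) \<in> ballot P' i)
        \<longrightarrow> x \<in> F P')"

end

theory Submission
  imports Defs
begin

(* In P0 the majority graph is the cycle 0 -> 1 -> 2 -> 0 with margins 3, 3, 1. Split Cycle lets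
   1 defeat 2, because the only majority path back, 2 -> 0 -> 1, has strength 1 < 3. Its
   ignore-source strength discards the weak first edge and is 3, so 1 does not defeat 2 under isc,
   and 2 is undefeated. A new voter 0 > 2 > 1 lowers the margin of 2 over 0 to zero, which destroys
   every majority path from 2 to 1; then 1 defeats 2 under isc although the new voter ranks 2 above 1,
   the only candidate that 2 does not beat in P0. *)

fun ranking :: "'a list \<Rightarrow> ('a \<times> 'a) set" where
  "ranking [] = {}"
| "ranking (x # xs) = {x} \<times> set xs \<union> ranking xs"

lemma ranking_subset: "ranking xs \<subseteq> set xs \<times> set xs"
  by (induction xs) auto

lemma strict_linear_order_on_ranking:
  "distinct xs \<Longrightarrow> strict_linear_order_on (set xs) (ranking xs)"
proof (induction xs)
  case (Cons x xs)
  then have x: "x \<notin> set xs" and slo: "strict_linear_order_on (set xs) (ranking xs)"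
    by auto
  have "trans (ranking (x # xs))"
    using x slo ranking_subset[of xs]
    unfolding strict_linear_order_on_def trans_def by fastforce
  moreover have "irrefl (ranking (x # xs))"
    using x slo by (auto simp: strict_linear_order_on_def irrefl_def)
  moreover have "total_on (set (x # xs)) (ranking (x # xs))"
    using slo by (auto simp: strict_linear_order_on_def total_on_def)
  ultimately show ?case
    by (simp add: strict_linear_order_on_def)
qed (simp add: strict_linear_order_on_def irrefl_def)

definition list_profile :: "nat set \<Rightarrow> nat list list \<Rightarrow> prof" where
  "list_profile C bs = \<lparr>voters = {..<length bs}, cands = C, ballot = (\<lambda>i. ranking (bs ! i))\<rparr>"

lemma profile_list_profile:
  assumes "bs \<noteq> []" "C \<noteq> {}" and ballots: "\<forall>b\<in>set bs. distinct b \<and> set b = C"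
  shows "profile (list_profile C bs)"
proof -
  have "finite C" using assms(1) ballots by (metis List.finite_set last_in_set)
  moreover have "ranking b \<subseteq> C \<times> C \<and> strict_linear_order_on C (ranking b)" if "b \<in> set bs" for b
    using ballots that ranking_subset[of b] strict_linear_order_on_ranking[of b] by auto
  ultimately show ?thesis
    using assms(1,2) unfolding profile_def list_profile_def by auto
qed

lemma adds_voter_list_profile:
  assumes "profile (list_profile C bs)" "profile (list_profile C (bs @ [b]))"
  shows "adds_voter (list_profile C bs) (list_profile C (bs @ [b])) (length bs)"
  using assms by (auto simp: adds_voter_def list_profile_def nth_append lessThan_Suc)

lemma margin_list_profile:
  "margin (list_profile C bs) x y =
     int (length (filter (\<lambda>b. (x, y) \<in> ranking b) bs)) - int (length (filter (\<lambda>b. (y, x) \<in> ranking b) bs))"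
  by (simp add: margin_def list_profile_def length_filter_conv_card)

lemma mpath_length_le_card:
  assumes "finite (cands P)" "mpath P \<rho> a b"
  shows "length \<rho> \<le> card (cands P)"
  using assms card_mono[of "cands P" "set \<rho>"] by (simp add: mpath_def distinct_card)

lemma finite_mpaths:
  assumes "finite (cands P)"
  shows "finite {\<rho>. mpath P \<rho> a b}"
proof (rule finite_subset)
  show "{\<rho>. mpath P \<rho> a b} \<subseteq> {\<rho>. set \<rho> \<subseteq> cands P \<and> length \<rho> \<le> card (cands P)}"
    using mpath_length_le_card[OF assms] by (auto simp: mpath_def)
qed (rule finite_lists_length_le[OF assms])

lemma strength_is_path_pos:
  assumes "mpath P \<rho> a b"
  shows "0 < strength_is_path P \<rho> a"
proof -
  define S where "S = {margin P u v | u v. (u, v) \<in> set (path_edges \<rho>) \<and> u \<noteq> a}"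
  have "finite S"
    unfolding S_def by (rule finite_subset[of _ "(\<lambda>(u, v). margin P u v) ` set (path_edges \<rho>)"]) auto
  moreover have "\<forall>m\<in>S. 0 < m"
    using assms unfolding S_def mpath_def by auto
  ultimately show ?thesis
    unfolding strength_is_path_def S_def[symmetric] by (simp add: Let_def)
qed

lemma strength_is_path_le_strength_is:
  assumes "finite (cands P)" "mpath P \<rho> a b"
  shows "strength_is_path P \<rho> a \<le> strength_is P a b"
proof -
  have "finite {strength_is_path P \<rho> a | \<rho>. mpath P \<rho> a b}"
    using finite_mpaths[OF assms(1)] by simp
  then show ?thesis
    using assms(2) unfolding strength_is_def by (auto intro: Max_ge)
qed

lemma strength_is_nonneg:
  assumes "finite (cands P)"
  shows "0 \<le> strength_is P a b"
proof (cases "\<exists>\<rho>. mpath P \<rho> a b")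
  case True
  then obtain \<rho> where "mpath P \<rho> a b" by blast
  then show ?thesis
    using strength_is_path_pos strength_is_path_le_strength_is[OF assms] by (meson less_imp_le order_trans)
qed (simp add: strength_is_def)

lemma isc_imp_margin_pos:
  assumes "finite (cands P)" "(x, y) \<in> isc P"
  shows "0 < margin P x y"
proof -
  have "strength_is P y x < ereal (of_int (margin P x y))"
    using assms(2) by (simp add: isc_def)
  with strength_is_nonneg[OF assms(1)] have "0 < ereal (of_int (margin P x y))"
    by (rule order.strict_trans1)
  then show ?thesis by simp
qed

lemma mpath_three_cands_iff:
  assumes "cands P = {a, b, c}" "distinct [a, b, c]"
  shows "mpath P \<rho> a b \<longleftrightarrow>
    \<rho> = [a, b] \<and> 0 < margin P a b \<or> \<rho> = [a, c, b] \<and> 0 < margin P a c \<and> 0 < margin P c b"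
proof
  assume path: "mpath P \<rho> a b"
  have "length \<rho> \<le> 3"
    using mpath_length_le_card[OF _ path] assms by simp
  moreover obtain x y zs where \<rho>: "\<rho> = x # y # zs"
    using path unfolding mpath_def by (metis One_nat_def Suc_1 Suc_le_length_iff)
  ultimately have "zs = [] \<or> (\<exists>z. zs = [z])"
    by (cases zs) auto
  then have "\<rho> = [a, b] \<or> \<rho> = [a, c, b]"
  proof
    assume "zs = []"
    then show ?thesis using path by (simp add: mpath_def \<rho>)
  next
    assume "\<exists>z. zs = [z]"
    then obtain z where z: "zs = [z]" ..
    then have "x = a" "z = b" "y \<noteq> a" "y \<noteq> b" "y \<in> {a, b, c}"
      using path assms(1) by (auto simp: mpath_def \<rho>)
    then show ?thesis by (simp add: \<rho> z)
  qed
  then show "\<rho> = [a, b] \<and> 0 < margin P a b \<or> \<rho> = [a, c, b] \<and> 0 < margin P a c \<and> 0 < margin P c b"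
    using path by (elim disjE) (simp_all add: mpath_def path_edges_def)
next
  assume "\<rho> = [a, b] \<and> 0 < margin P a b \<or> \<rho> = [a, c, b] \<and> 0 < margin P a c \<and> 0 < margin P c b"
  then show "mpath P \<rho> a b"
    using assms by (elim disjE) (auto simp: mpath_def path_edges_def)
qed

lemma strength_two_edges:
  "strength P [a, c, b] = min (margin P a c) (margin P c b)"
proof -
  have "{margin P u v | u v. (u, v) \<in> set (path_edges [a, c, b])} = {margin P a c, margin P c b}"
    by (auto simp: path_edges_def)
  then show ?thesis by (simp add: strength_def)
qed

lemma strength_is_path_two_edges:
  assumes "c \<noteq> a"
  shows "strength_is_path P [a, c, b] a = ereal (margin P c b)"
proof -
  have "{margin P u v | u v. (u, v) \<in> set (path_edges [a, c, b]) \<and> u \<noteq> a} = {margin P c b}"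
    using assms by (auto simp: path_edges_def)
  then show ?thesis by (simp add: strength_is_path_def)
qed

definition cycle_ballots :: "nat list list" where
  "cycle_ballots = replicate 3 [0, 1, 2] @ replicate 2 [1, 2, 0] @ replicate 2 [2, 0, 1]"

definition P0 :: prof where
  "P0 = list_profile {0, 1, 2} cycle_ballots"

definition P1 :: prof where
  "P1 = list_profile {0, 1, 2} (cycle_ballots @ [[0, 2, 1]])"

lemma margins_P0: "margin P0 0 1 = 3" "margin P0 1 2 = 3" "margin P0 2 0 = 1"
  "margin P0 1 0 = -3" "margin P0 2 1 = -3" "margin P0 0 2 = -1"
  by (simp_all add: P0_def cycle_ballots_def margin_list_profile numeral_eq_Suc)

lemma margins_P1: "margin P1 0 1 = 4" "margin P1 1 2 = 2" "margin P1 2 0 = 0"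
  "margin P1 2 1 = -2"
  by (simp_all add: P1_def cycle_ballots_def margin_list_profile numeral_eq_Suc)

lemma profile_P0: "profile P0"
  unfolding P0_def by (rule profile_list_profile) (auto simp: cycle_ballots_def)

lemma profile_P1: "profile P1"
  unfolding P1_def by (rule profile_list_profile) (auto simp: cycle_ballots_def)

lemma adds_voter_P0_P1: "adds_voter P0 P1 7"
  using adds_voter_list_profile[OF profile_P0[unfolded P0_def] profile_P1[unfolded P1_def]]
  by (simp add: P0_def P1_def cycle_ballots_def)

lemma ballot_P1_new_voter: "ballot P1 7 = ranking [0, 2, 1]"
  by (simp add: P1_def list_profile_def cycle_ballots_def nth_append)

lemma cands_P0: "cands P0 = {2, 1, 0}"
  by (auto simp: P0_def list_profile_def)

lemma cands_P1: "cands P1 = {2, 1, 0}"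
  by (auto simp: P1_def list_profile_def)

lemma sc_P0: "(1, 2) \<in> sc P0"
proof -
  have "strength P0 \<rho> < margin P0 1 2" if "mpath P0 \<rho> 2 1" for \<rho>
  proof -
    have "\<rho> = [2, 0, 1]"
      using that mpath_three_cands_iff[OF cands_P0] margins_P0 by auto
    then show ?thesis
      using margins_P0 by (simp add: strength_two_edges)
  qed
  then show ?thesis
    using margins_P0 unfolding sc_def cands_P0 by auto
qed

lemma not_isc_P0: "(1, 2) \<notin> isc P0"
proof -
  have "mpath P0 [2, 0, 1] 2 1"
    using mpath_three_cands_iff[OF cands_P0] margins_P0 by simp
  then have "strength_is_path P0 [2, 0, 1] 2 \<le> strength_is P0 2 1"
    by (rule strength_is_path_le_strength_is[rotated]) (simp add: cands_P0)
  then show ?thesis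
    using strength_is_path_two_edges[of 0 2 P0 1] margins_P0 by (simp add: isc_def not_less)
qed

lemma isc_P1: "(1, 2) \<in> isc P1"
proof -
  have "\<not> mpath P1 \<rho> 2 1" for \<rho>
    using mpath_three_cands_iff[OF cands_P1] margins_P1 by simp
  then have "strength_is P1 2 1 = 0"
    by (simp add: strength_is_def)
  then show ?thesis
    using margins_P1 by (simp add: isc_def cands_P1)
qed

lemma ISC_P0: "2 \<in> ISC P0"
proof -
  have "(y, 2) \<notin> isc P0" for y
  proof
    assume defeat: "(y, 2) \<in> isc P0"
    then have "0 < margin P0 y 2"
      by (rule isc_imp_margin_pos[rotated]) (simp add: cands_P0)
    moreover have "y \<in> {2, 1, 0}"
      using defeat by (simp add: isc_def cands_P0)
    ultimately show False
      using defeat not_isc_P0 margins_P0 by (auto simp: margin_def)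
  qed
  then show ?thesis
    by (simp add: ISC_def cands_P0)
qed

theorem proposition8p8:
  shows "(\<exists>P. profile P \<and> \<not> sc P \<subseteq> isc P)
       \<and> \<not> positive_involvement_in_defeat isc
       \<and> \<not> tolerant_positive_involvement ISC"
proof (intro conjI)
  show "\<exists>P. profile P \<and> \<not> sc P \<subseteq> isc P"
    using profile_P0 sc_P0 not_isc_P0 by blast
  have "(2, 1) \<in> ballot P1 7"
    by (simp add: ballot_P1_new_voter)
  then show "\<not> positive_involvement_in_defeat isc"
    unfolding positive_involvement_in_defeat_def
    using adds_voter_P0_P1 not_isc_P0 isc_P1 by blast
  have "\<forall>y\<in>cands P0. y \<noteq> 2 \<and> \<not> margin P0 2 y > 0 \<longrightarrow> (2, y) \<in> ballot P1 7"
    using margins_P0 by (auto simp: cands_P0 ballot_P1_new_voter)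
  moreover have "2 \<notin> ISC P1"
    using isc_P1 by (auto simp: ISC_def)
  ultimately show "\<not> tolerant_positive_involvement ISC"
    unfolding tolerant_positive_involvement_def
    using adds_voter_P0_P1 ISC_P0 by blast
qed

end
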